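(* Let $n\ge 2$, $F\in GL^+(n)$, $\mu>0$, $\mu_c\ge 0$, and consider $\widetilde W_{\mu,\mu_c}(\cdot;F):SO(n)\to\mathbb R$. Then: (i) A rotation $R\in SO(n)$ is a critical point of $\widetilde W_{\mu,\mu_c}(\cdot;F)$ if and only if $$(\mu-\mu_c)\big(FR^TFR^T-RF^TRF^T\big)=2\mu\,(FR^T-RF^T).$$ (ii) Let $X\in\mathcal M_{n\times n}(\mathbb R)$ with $\det X>0$ and put $R=X^TF^{-T}$. Then $R\in SO(n)$ and $R$ is a critical point of $\widetilde W_{\mu,\mu_c}(\cdot;F)$ if and only if $$(\mu-\mu_c)\big(X^2-(X^T)^2\big)=2\mu(X-X^T)\quad\text{and}\quad XX^T=FF^T .$$ (iii) Equivalently, with $X$ and $R$ as in (ii), $R\in SO(n)$ is a critical point if and only if $$(X-X^T)\big((\mu-\mu_c)(X+X^T)-2\mu\,\mathbb I_n\big)=(\mu-\mu_c)[X,X^T]\quad\text{and}\quad XX^T=FF^T,$$ where $[U,V]=UV-VU$. (Every $R\in SO(n)$ arises in this way, with $X=FR^T$.)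
   Context: For a square matrix $Y$, $\mathrm{sym}(Y)=\tfrac12(Y+Y^T)$, $\mathrm{skew}(Y)=\tfrac12(Y-Y^T)$, and $\|Y\|^2=\mathrm{tr}(Y^TY)$ is the Frobenius norm. $GL^+(n)$ denotes real $n\times n$ matrices with positive determinant. For $F\in GL^+(n)$, $\mu>0$, $\mu_c\ge0$, the generalized free energy is $\widetilde W_{\mu,\mu_c}(R;F)=\mu\|\mathrm{sym}(R^TF-\mathbb I_n)\|^2+\mu_c\|\mathrm{skew}(R^TF-\mathbb I_n)\|^2$ for $R\in SO(n)$. A critical point means a critical point of this function restricted to the smooth submanifold $SO(n)\subset\mathcal M_{n\times n}(\mathbb R)$. *)

theory Defs
  imports "HOL-Analysis.Analysis"
begin

type_synonym 'n sqmat = "real^'n^'n"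

definition SOn :: "'n::finite sqmat set" where
  "SOn = {R. rotation_matrix R}"

definition msym :: "'n::finite sqmat \<Rightarrow> 'n sqmat" where
  "msym Y = (1/2) *\<^sub>R (Y + transpose Y)"

definition mskew :: "'n::finite sqmat \<Rightarrow> 'n sqmat" where
  "mskew Y = (1/2) *\<^sub>R (Y - transpose Y)"

definition frob_sq :: "'n::finite sqmat \<Rightarrow> real" where
  "frob_sq Y = trace (transpose Y ** Y)"

definition Wgen :: "real \<Rightarrow> real \<Rightarrow> 'n::finite sqmat \<Rightarrow> 'n sqmat \<Rightarrow> real" where
  "Wgen mu muc F R =
     mu * frob_sq (msym (transpose R ** F - mat 1)) + muc * frob_sq (mskew (transpose R ** F - mat 1))"

definition crit_on :: "('n::finite sqmat \<Rightarrow> real) \<Rightarrow> 'n sqmat set \<Rightarrow> 'n sqmat \<Rightarrow> bool" where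
  "crit_on f M R \<longleftrightarrow> R \<in> M \<and>
     (\<forall>\<gamma> v. (\<forall>t. \<gamma> t \<in> M) \<and> \<gamma> 0 = R \<and> (\<gamma> has_vector_derivative v) (at 0)
        \<longrightarrow> ((\<lambda>t. f (\<gamma> t)) has_real_derivative 0) (at 0))"

end

theory Submission
  imports Defs
begin

text \<open>The tangent space of \<open>SO(n)\<close> at \<open>R\<close> is \<open>R\<cdot>so(n)\<close>. Differentiating \<open>W\<close> along a curve
  with velocity \<open>R A\<close>, \<open>A\<close> skew, gives \<open>tr (A M)\<close> with \<open>M = 2\<mu> U - (\<mu> - \<mu>\<^sub>c) U\<^sup>2\<close>, \<open>U = R\<^sup>T F\<close>;
  this vanishes for all skew \<open>A\<close> iff \<open>M\<close> is symmetric, and rotations in the coordinate planes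
  supply curves realising every elementary skew direction. Conjugating \<open>M = M\<^sup>T\<close> by \<open>R\<close> gives (i).
  Substituting \<open>X = F R\<^sup>T\<close> turns (i) into (ii) and (iii), and \<open>R = X\<^sup>T F\<^sup>-\<^sup>T\<close> is orthogonal exactly
  when \<open>X X\<^sup>T = F F\<^sup>T\<close>; its determinant is positive because \<open>det X\<close> and \<open>det F\<close> are.\<close>

lemma matrix_add_rdistrib: "((A::'a::semiring_1^'n^'m) + B) ** C = A ** C + B ** C"
  by (simp add: matrix_matrix_mult_def vec_eq_iff sum.distrib distrib_right)

lemma matrix_diff_ldistrib: "(A::'a::ring_1^'n^'m) ** (B - C) = A ** B - A ** C"
  by (simp add: matrix_matrix_mult_def vec_eq_iff sum_subtractf right_diff_distrib)

lemma matrix_diff_rdistrib: "((A::'a::ring_1^'n^'m) - B) ** C = A ** C - B ** C"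
  by (simp add: matrix_matrix_mult_def vec_eq_iff sum_subtractf left_diff_distrib)

lemma matrix_neg_left: "(- (A::'a::ring_1^'n^'m)) ** B = - (A ** B)"
  by (simp add: matrix_matrix_mult_def vec_eq_iff sum_negf)

lemma matrix_neg_right: "(A::'a::ring_1^'n^'m) ** (- B) = - (A ** B)"
  by (simp add: matrix_matrix_mult_def vec_eq_iff sum_negf)

lemma matrix_scaleR_left: "(k *\<^sub>R (A::'a::real_algebra_1^'n^'m)) ** B = k *\<^sub>R (A ** B)"
  by (simp add: scalar_matrix_assoc)

lemma matrix_scaleR_right: "(A::'a::real_algebra_1^'n^'m) ** (k *\<^sub>R B) = k *\<^sub>R (A ** B)"
  by (simp add: matrix_scalar_ac scalar_matrix_assoc)

lemma transpose_add: "transpose ((A::'a::plus^'n^'m) + B) = transpose A + transpose B"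
  by (simp add: transpose_def vec_eq_iff)

lemma transpose_diff: "transpose ((A::'a::minus^'n^'m) - B) = transpose A - transpose B"
  by (simp add: transpose_def vec_eq_iff)

lemma transpose_neg: "transpose (- (A::'a::uminus^'n^'m)) = - transpose A"
  by (simp add: transpose_def vec_eq_iff)

lemma trace_transpose: "trace (transpose (A::'a::semiring_1^'n^'n)) = trace A"
  by (simp add: trace_def transpose_def)

lemma trace_scaleR: "trace (k *\<^sub>R (A::'a::real_algebra_1^'n^'n)) = k *\<^sub>R trace A"
  by (simp add: trace_def scaleR_sum_right)

lemma trace_neg: "trace (- (A::'a::ring_1^'n^'n)) = - trace A"
  by (simp add: trace_def sum_negf)

lemmas matrix_algebra_simps = matrix_add_ldistrib matrix_add_rdistrib matrix_diff_ldistrib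
  matrix_diff_rdistrib matrix_scaleR_left matrix_scaleR_right matrix_neg_left matrix_neg_right
  transpose_add transpose_diff transpose_neg transpose_scalar trace_add trace_sub trace_scaleR trace_neg

lemma trace_transpose_mult_transpose:
  "trace (transpose A ** transpose B) = trace (A ** (B::'a::comm_semiring_1^'n^'n))"
  by (metis matrix_transpose_mul trace_transpose trace_mul_sym)

lemma trace_mult_transpose:
  "trace (A ** transpose B) = trace (transpose A ** (B::'a::comm_semiring_1^'n^'n))"
  by (metis trace_transpose_mult_transpose transpose_transpose)

lemma trace_skew_mult_symmetric:
  fixes A S :: "'a::linordered_idom^'n^'n"
  assumes "transpose A = - A" and "transpose S = S"
  shows "trace (A ** S) = 0"
proof -
  have "trace (A ** S) = - trace (A ** S)"
    by (metis assms matrix_transpose_mul matrix_neg_left trace_neg trace_transpose trace_mul_sym)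
  then show ?thesis by (simp add: equal_neg_zero)
qed

lemma bounded_linear_transpose: "bounded_linear (transpose :: real^'n^'m \<Rightarrow> real^'m^'n)"
  by (rule linear_conv_bounded_linear[THEN iffD1], rule linearI)
     (simp_all add: transpose_add transpose_scalar)

lemma bounded_linear_trace: "bounded_linear (trace :: real^'n^'n \<Rightarrow> real)"
  by (rule linear_conv_bounded_linear[THEN iffD1], rule linearI) (simp_all add: trace_add trace_scaleR)

lemma bounded_linear_msym: "bounded_linear (msym :: 'n::finite sqmat \<Rightarrow> 'n sqmat)"
  by (rule linear_conv_bounded_linear[THEN iffD1], rule linearI)
     (simp_all add: msym_def transpose_add transpose_scalar algebra_simps)

lemma bounded_linear_mskew: "bounded_linear (mskew :: 'n::finite sqmat \<Rightarrow> 'n sqmat)"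
  by (rule linear_conv_bounded_linear[THEN iffD1], rule linearI)
     (simp_all add: mskew_def transpose_add transpose_scalar algebra_simps)

lemma bounded_bilinear_matrix_mult:
  "bounded_bilinear ((**) :: real^'n^'m \<Rightarrow> real^'k^'n \<Rightarrow> real^'k^'m)"
  by (rule bilinear_conv_bounded_bilinear[THEN iffD1])
     (auto simp: bilinear_def intro!: linearI
       simp: matrix_add_ldistrib matrix_add_rdistrib matrix_scaleR_left matrix_scaleR_right)

lemma has_real_derivative_frob_sq:
  fixes Z :: "real \<Rightarrow> 'n::finite sqmat"
  assumes "(Z has_vector_derivative Z') (at t)"
  shows "((\<lambda>t. frob_sq (Z t)) has_real_derivative 2 * trace (transpose (Z t) ** Z')) (at t)"
proof -
  have "((\<lambda>t. transpose (Z t)) has_vector_derivative transpose Z') (at t)"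
    using bounded_linear.has_vector_derivative[OF bounded_linear_transpose assms] .
  then have "((\<lambda>t. transpose (Z t) ** Z t) has_vector_derivative
      transpose (Z t) ** Z' + transpose Z' ** Z t) (at t)"
    using bounded_bilinear.has_vector_derivative[OF bounded_bilinear_matrix_mult _ assms] by blast
  then have "((\<lambda>t. trace (transpose (Z t) ** Z t)) has_vector_derivative
      trace (transpose (Z t) ** Z' + transpose Z' ** Z t)) (at t)"
    using bounded_linear.has_vector_derivative[OF bounded_linear_trace] by blast
  moreover have "trace (transpose Z' ** Z t) = trace (transpose (Z t) ** Z')"
    by (metis trace_mult_transpose trace_mul_sym)
  ultimately show ?thesis
    by (simp add: frob_sq_def has_real_derivative_iff_has_vector_derivative trace_add)
qed

lemma trace_msym_mult_msym:
  "2 * trace (transpose (msym Y) ** msym V) = trace (Y ** V) + trace (transpose Y ** V)"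
  for Y V :: "'n::finite sqmat"
  unfolding msym_def
  by (simp add: matrix_algebra_simps trace_transpose_mult_transpose trace_mult_transpose algebra_simps)

lemma trace_mskew_mult_mskew:
  "2 * trace (transpose (mskew Y) ** mskew V) = trace (transpose Y ** V) - trace (Y ** V)"
  for Y V :: "'n::finite sqmat"
  unfolding mskew_def
  by (simp add: matrix_algebra_simps trace_transpose_mult_transpose trace_mult_transpose algebra_simps)

definition Wgen_grad_poly :: "real \<Rightarrow> real \<Rightarrow> 'n::finite sqmat \<Rightarrow> 'n sqmat" where
  "Wgen_grad_poly mu muc U = (2 * mu) *\<^sub>R U - (mu - muc) *\<^sub>R (U ** U)"

lemma has_real_derivative_Wgen:
  fixes \<gamma> :: "real \<Rightarrow> 'n::finite sqmat"
  assumes \<gamma>: "(\<gamma> has_vector_derivative R ** A) (at t)" "\<gamma> t = R" and skew: "transpose A = - A"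
  shows "((\<lambda>t. Wgen mu muc F (\<gamma> t)) has_real_derivative trace (A ** Wgen_grad_poly mu muc (transpose R ** F))) (at t)"
proof -
  define U where "U = transpose R ** F"
  define V where "V = transpose (R ** A) ** F"
  have Y: "((\<lambda>t. transpose (\<gamma> t) ** F - mat 1) has_vector_derivative V) (at t)"
    unfolding V_def has_vector_derivative_diff_const
    using bounded_linear.has_vector_derivative[OF bounded_linear_compose
        [OF bounded_bilinear.bounded_linear_left[OF bounded_bilinear_matrix_mult, of F]
          bounded_linear_transpose] \<gamma>(1)]
    by simp
  have "((\<lambda>t. Wgen mu muc F (\<gamma> t)) has_real_derivative
     mu * (2 * trace (transpose (msym (U - mat 1)) ** msym V)) +
     muc * (2 * trace (transpose (mskew (U - mat 1)) ** mskew V))) (at t)"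
    unfolding Wgen_def U_def
    using DERIV_add[OF
        DERIV_cmult[OF has_real_derivative_frob_sq[OF
            bounded_linear.has_vector_derivative[OF bounded_linear_msym Y]]]
        DERIV_cmult[OF has_real_derivative_frob_sq[OF
            bounded_linear.has_vector_derivative[OF bounded_linear_mskew Y]]]] \<gamma>(2)
    by simp
  moreover have "V = - (A ** U)"
    unfolding V_def U_def by (simp add: matrix_transpose_mul skew matrix_neg_left matrix_mul_assoc)
  moreover have "trace (U ** (A ** U)) = trace (A ** (U ** U))"
    by (metis matrix_mul_assoc trace_mul_sym)
  moreover have "trace (transpose U ** (A ** U)) = 0"
    by (metis matrix_mul_assoc trace_mul_sym trace_skew_mult_symmetric[OF skew]
        matrix_transpose_mul transpose_transpose)
  ultimately show ?thesis
    unfolding trace_msym_mult_msym trace_mskew_mult_mskew Wgen_grad_poly_def U_def[symmetric]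
    by (simp add: matrix_algebra_simps algebra_simps)
qed

lemma SOn_transpose_mult: "R \<in> SOn \<Longrightarrow> transpose R ** R = mat 1"
  by (simp add: SOn_def rotation_matrix_def orthogonal_matrix_def)

lemma SOn_mult_transpose: "R \<in> SOn \<Longrightarrow> R ** transpose R = mat 1"
  by (simp add: SOn_def rotation_matrix_def orthogonal_matrix_def)

lemma orthogonal_curve_velocity_skew:
  fixes \<gamma> :: "real \<Rightarrow> real^'n^'n"
  assumes orth: "\<And>t. transpose (\<gamma> t) ** \<gamma> t = mat 1" and \<gamma>: "(\<gamma> has_vector_derivative v) (at t)"
  shows "transpose (transpose (\<gamma> t) ** v) = - (transpose (\<gamma> t) ** v)"
proof -
  have "((\<lambda>t. transpose (\<gamma> t) ** \<gamma> t) has_vector_derivative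
      transpose (\<gamma> t) ** v + transpose v ** \<gamma> t) (at t)"
    using bounded_bilinear.has_vector_derivative[OF bounded_bilinear_matrix_mult
        bounded_linear.has_vector_derivative[OF bounded_linear_transpose \<gamma>] \<gamma>] .
  moreover have "((\<lambda>t. transpose (\<gamma> t) ** \<gamma> t) has_vector_derivative 0) (at t)"
    by (simp add: orth)
  ultimately have "transpose (\<gamma> t) ** v + transpose v ** \<gamma> t = 0"
    by (rule vector_derivative_unique_at)
  then show ?thesis
    by (simp add: matrix_transpose_mul eq_neg_iff_add_eq_0 add.commute)
qed

definition elem_mat :: "'n::finite \<Rightarrow> 'n \<Rightarrow> 'a::semiring_1^'n^'n" where
  "elem_mat a b = (\<chi> r c. if r = a \<and> c = b then 1 else 0)"

lemma elem_mat_mult: "elem_mat a b ** elem_mat c d = (if b = c then elem_mat a d else 0)"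
proof -
  have "(\<Sum>k\<in>UNIV. (if r = a \<and> k = b then 1 else 0) * (if k = c \<and> s = d then 1 else 0))
     = (if b = c \<and> r = a \<and> s = d then 1 else (0::'a::semiring_1))" for r s
  proof -
    have "(\<lambda>k. (if r = a \<and> k = b then 1 else 0) * (if k = c \<and> s = d then 1 else (0::'a)))
       = (\<lambda>k. if k = b then (if b = c \<and> r = a \<and> s = d then 1 else 0) else 0)"
      by auto
    then show ?thesis by (simp only:) (simp add: sum.delta)
  qed
  then show ?thesis
    unfolding elem_mat_def matrix_matrix_mult_def vec_eq_iff by simp
qed

lemma transpose_elem_mat: "transpose (elem_mat a b) = elem_mat b a"
  by (auto simp: elem_mat_def transpose_def vec_eq_iff)

lemma trace_elem_mat_mult: "trace (elem_mat a b ** X) = X $ b $ a"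
proof -
  have "(\<Sum>k\<in>UNIV. (if i = a \<and> k = b then 1 else 0) * X $ k $ i) = (if i = a then X $ b $ a else 0)"
    for i
  proof -
    have "(\<lambda>k. (if i = a \<and> k = b then 1 else 0) * X $ k $ i)
        = (\<lambda>k. if k = b then (if i = a then X $ b $ a else 0) else 0)"
      by auto
    then show ?thesis by (simp only:) (simp add: sum.delta)
  qed
  then show ?thesis
    unfolding elem_mat_def trace_def matrix_matrix_mult_def by (simp add: sum.delta)
qed

definition plane_rotation :: "'n::finite \<Rightarrow> 'n \<Rightarrow> real \<Rightarrow> real^'n^'n" where
  "plane_rotation i j t = mat 1 + (cos t - 1) *\<^sub>R (elem_mat i i + elem_mat j j)
     + sin t *\<^sub>R (elem_mat j i - elem_mat i j)"

lemma plane_rotation_0 [simp]: "plane_rotation i j 0 = mat 1"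
  by (simp add: plane_rotation_def)

lemma has_vector_derivative_plane_rotation:
  "(plane_rotation i j has_vector_derivative (elem_mat j i - elem_mat i j)) (at 0)"
  unfolding plane_rotation_def by (auto intro!: derivative_eq_intros)

lemma orthogonal_matrix_plane_rotation:
  fixes i j :: "'n::finite"
  assumes "i \<noteq> j"
  shows "orthogonal_matrix (plane_rotation i j t)"
proof -
  define P :: "real^'n^'n" where "P = elem_mat i i + elem_mat j j"
  define K :: "real^'n^'n" where "K = elem_mat j i - elem_mat i j"
  have "P ** P = P" "P ** K = K" "K ** P = K" "K ** K = - P" "transpose P = P" "transpose K = - K"
    using assms by (auto simp: P_def K_def matrix_algebra_simps elem_mat_mult transpose_elem_mat)
  moreover have "(cos t * cos t) *\<^sub>R P + (sin t * sin t) *\<^sub>R P = P"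
    by (metis sin_cos_squared_add3 scaleR_left_distrib scaleR_one)
  ultimately have "transpose (plane_rotation i j t) ** plane_rotation i j t = mat 1"
    unfolding plane_rotation_def P_def[symmetric] K_def[symmetric]
    by (simp add: matrix_algebra_simps algebra_simps)
  then show ?thesis by (simp add: orthogonal_matrix)
qed

text \<open>The square of an orthogonal matrix has determinant \<open>1\<close>, which spares computing
  \<open>det (plane_rotation i j t)\<close>.\<close>
lemma SOn_mult_plane_rotation_square:
  assumes "R \<in> SOn" and "i \<noteq> j"
  shows "R ** (plane_rotation i j t ** plane_rotation i j t) \<in> SOn"
proof -
  have o: "orthogonal_matrix (plane_rotation i j t)"
    using orthogonal_matrix_plane_rotation[OF assms(2)] .
  then have "det (plane_rotation i j t ** plane_rotation i j t) = 1"
    using det_orthogonal_matrix[OF o] by (auto simp: det_mul)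
  then show ?thesis
    using assms(1) orthogonal_matrix_mul[OF o o]
    by (simp add: SOn_def rotation_matrix_def orthogonal_matrix_mul det_mul)
qed

lemma crit_on_Wgen_imp_symmetric_entry:
  fixes F R :: "'n::finite sqmat"
  assumes R: "R \<in> SOn" and crit: "crit_on (Wgen mu muc F) SOn R" and "i \<noteq> j"
  defines "M \<equiv> Wgen_grad_poly mu muc (transpose R ** F)"
  shows "M $ i $ j = M $ j $ i"
proof -
  define K :: "'n sqmat" where "K = elem_mat j i - elem_mat i j"
  define \<gamma> where "\<gamma> t = R ** (plane_rotation i j t ** plane_rotation i j t)" for t
  have "((\<lambda>t. plane_rotation i j t ** plane_rotation i j t) has_vector_derivative K + K) (at 0)"
    using bounded_bilinear.has_vector_derivative[OF bounded_bilinear_matrix_mult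
        has_vector_derivative_plane_rotation[of i j] has_vector_derivative_plane_rotation[of i j]]
    by (simp add: K_def)
  then have d\<gamma>: "(\<gamma> has_vector_derivative R ** (K + K)) (at 0)"
    unfolding \<gamma>_def
    using bounded_linear.has_vector_derivative[OF
        bounded_bilinear.bounded_linear_right[OF bounded_bilinear_matrix_mult]] by blast
  have "transpose K = - K"
    by (simp add: K_def transpose_diff transpose_elem_mat)
  then have skew: "transpose (K + K) = - (K + K)"
    by (simp only: transpose_add minus_add_distrib)
  then have "((\<lambda>t. Wgen mu muc F (\<gamma> t)) has_real_derivative trace ((K + K) ** M)) (at 0)"
    unfolding M_def using has_real_derivative_Wgen[OF d\<gamma> _ skew] by (simp add: \<gamma>_def)
  moreover have "((\<lambda>t. Wgen mu muc F (\<gamma> t)) has_real_derivative 0) (at 0)"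
  proof -
    have "\<gamma> t \<in> SOn" for t
      unfolding \<gamma>_def by (rule SOn_mult_plane_rotation_square[OF R \<open>i \<noteq> j\<close>])
    moreover have "\<gamma> 0 = R"
      by (simp add: \<gamma>_def)
    ultimately show ?thesis
      using crit d\<gamma> unfolding crit_on_def by blast
  qed
  ultimately have "trace ((K + K) ** M) = 0"
    by (rule DERIV_unique)
  then show ?thesis
    unfolding K_def matrix_add_rdistrib matrix_diff_rdistrib trace_add trace_sub
      trace_elem_mat_mult
    by simp
qed

lemma crit_on_Wgen_imp_symmetric:
  fixes F R :: "'n::finite sqmat"
  assumes "R \<in> SOn" and "crit_on (Wgen mu muc F) SOn R"
  shows "transpose (Wgen_grad_poly mu muc (transpose R ** F)) = Wgen_grad_poly mu muc (transpose R ** F)"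
  unfolding vec_eq_iff
proof (intro allI)
  fix a b
  show "transpose (Wgen_grad_poly mu muc (transpose R ** F)) $ a $ b
      = Wgen_grad_poly mu muc (transpose R ** F) $ a $ b"
    using crit_on_Wgen_imp_symmetric_entry[OF assms, of b a]
    by (cases "a = b") (simp_all add: transpose_def)
qed

lemma symmetric_imp_crit_on_Wgen:
  fixes F R :: "'n::finite sqmat"
  assumes R: "R \<in> SOn"
    and sym: "transpose (Wgen_grad_poly mu muc (transpose R ** F)) = Wgen_grad_poly mu muc (transpose R ** F)"
  shows "crit_on (Wgen mu muc F) SOn R"
  unfolding crit_on_def
proof (intro conjI allI impI)
  fix \<gamma> v
  assume "(\<forall>t. \<gamma> t \<in> SOn) \<and> \<gamma> 0 = R \<and> (\<gamma> has_vector_derivative v) (at 0)"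
  then have \<gamma>: "\<And>t. \<gamma> t \<in> SOn" "\<gamma> 0 = R" "(\<gamma> has_vector_derivative v) (at 0)"
    by auto
  define A where "A = transpose R ** v"
  have skew: "transpose A = - A"
    unfolding A_def using orthogonal_curve_velocity_skew[OF SOn_transpose_mult[OF \<gamma>(1)] \<gamma>(3)] \<gamma>(2)
    by simp
  have "v = R ** A"
    by (simp add: A_def matrix_mul_assoc SOn_mult_transpose[OF R])
  then have "((\<lambda>t. Wgen mu muc F (\<gamma> t)) has_real_derivative trace (A ** Wgen_grad_poly mu muc (transpose R ** F))) (at 0)"
    using has_real_derivative_Wgen[of \<gamma> R A 0, OF _ \<gamma>(2) skew] \<gamma>(3) by simp
  then show "((\<lambda>t. Wgen mu muc F (\<gamma> t)) has_real_derivative 0) (at 0)"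
    by (simp add: trace_skew_mult_symmetric[OF skew sym])
qed (fact R)

lemma Wgen_grad_poly_similar:
  assumes "S ** T = mat 1"
  shows "T ** Wgen_grad_poly mu muc U ** S = Wgen_grad_poly mu muc (T ** U ** S)"
proof -
  have "(T ** U ** S) ** (T ** U ** S) = T ** (U ** U) ** S"
    by (metis assms matrix_mul_assoc matrix_mul_rid)
  then show ?thesis
    by (simp add: Wgen_grad_poly_def matrix_algebra_simps matrix_mul_assoc)
qed

lemma symmetric_Wgen_grad_poly_iff:
  "transpose (Wgen_grad_poly mu muc X) = Wgen_grad_poly mu muc X \<longleftrightarrow>
     (mu - muc) *\<^sub>R (X ** X - transpose X ** transpose X) = (2 * mu) *\<^sub>R (X - transpose X)"
proof -
  have "Wgen_grad_poly mu muc X - transpose (Wgen_grad_poly mu muc X) =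
      (2 * mu) *\<^sub>R (X - transpose X) - (mu - muc) *\<^sub>R (X ** X - transpose X ** transpose X)"
    by (simp add: Wgen_grad_poly_def matrix_algebra_simps matrix_transpose_mul algebra_simps)
  then show ?thesis
    by (metis eq_iff_diff_eq_0)
qed

lemma orthogonal_similar_symmetric_iff:
  fixes R S :: "'a::comm_semiring_1^'n^'n"
  assumes "transpose R ** R = mat 1"
  shows "transpose (R ** S ** transpose R) = R ** S ** transpose R \<longleftrightarrow> transpose S = S"
proof
  assume "transpose (R ** S ** transpose R) = R ** S ** transpose R"
  then have "transpose R ** transpose (R ** S ** transpose R) ** R
      = transpose R ** (R ** S ** transpose R) ** R"
    by simp
  moreover have "transpose R ** (R ** A) = A" for A :: "'a^'n^'n"
    by (simp add: matrix_mul_assoc assms)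
  ultimately show "transpose S = S"
    by (simp add: matrix_transpose_mul matrix_mul_assoc[symmetric] assms)
qed (simp add: matrix_transpose_mul matrix_mul_assoc)

lemma crit_on_Wgen_iff:
  fixes F R :: "'n::finite sqmat"
  assumes R: "R \<in> SOn"
  shows "crit_on (Wgen mu muc F) SOn R \<longleftrightarrow>
     (mu - muc) *\<^sub>R (F ** transpose R ** F ** transpose R - R ** transpose F ** R ** transpose F)
       = (2 * mu) *\<^sub>R (F ** transpose R - R ** transpose F)"
proof -
  define X where "X = F ** transpose R"
  have "R ** (transpose R ** F) ** transpose R = X"
    by (simp add: X_def matrix_mul_assoc SOn_mult_transpose[OF R])
  then have "R ** Wgen_grad_poly mu muc (transpose R ** F) ** transpose R = Wgen_grad_poly mu muc X"
    using Wgen_grad_poly_similar[OF SOn_transpose_mult[OF R]] by metis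
  then have "crit_on (Wgen mu muc F) SOn R \<longleftrightarrow>
      transpose (Wgen_grad_poly mu muc X) = Wgen_grad_poly mu muc X"
    using crit_on_Wgen_imp_symmetric[OF R] symmetric_imp_crit_on_Wgen[OF R]
      orthogonal_similar_symmetric_iff[OF SOn_transpose_mult[OF R]]
    by metis
  also have "\<dots> \<longleftrightarrow>
      (mu - muc) *\<^sub>R (X ** X - transpose X ** transpose X) = (2 * mu) *\<^sub>R (X - transpose X)"
    by (rule symmetric_Wgen_grad_poly_iff)
  finally show ?thesis
    by (simp add: X_def matrix_transpose_mul matrix_mul_assoc)
qed

lemma matrix_inv_right_left:
  fixes A :: "'a::semiring_1^'n^'m"
  assumes "invertible A"
  shows "A ** matrix_inv A = mat 1" and "matrix_inv A ** A = mat 1"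
  using someI_ex[OF assms[unfolded invertible_def]] by (simp_all add: matrix_inv_def)

lemma mult_transpose_inv_transpose_cancel:
  fixes F :: "real^'n^'n"
  assumes "det F \<noteq> 0"
  shows "F ** transpose (transpose X ** matrix_inv (transpose F)) = X"
    and "transpose (F ** transpose R) ** matrix_inv (transpose F) = R"
proof -
  define G where "G = matrix_inv (transpose F)"
  have inv: "transpose F ** G = mat 1" "G ** transpose F = mat 1"
    using assms by (simp_all add: G_def matrix_inv_right_left invertible_det_nz)
  have "F ** transpose (transpose X ** G) = transpose (G ** transpose F) ** X"
    by (simp add: matrix_transpose_mul matrix_mul_assoc)
  then show "F ** transpose (transpose X ** matrix_inv (transpose F)) = X"
    by (simp add: inv G_def[symmetric])
  have "transpose (F ** transpose R) ** G = R ** (transpose F ** G)"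
    by (simp add: matrix_transpose_mul matrix_mul_assoc)
  then show "transpose (F ** transpose R) ** matrix_inv (transpose F) = R"
    by (simp add: inv G_def[symmetric])
qed

lemma invertible_congruence_eq_iff:
  fixes F A B :: "real^'n^'n"
  assumes "det F \<noteq> 0"
  shows "F ** A ** transpose F = F ** B ** transpose F \<longleftrightarrow> A = B"
proof
  define H where "H = matrix_inv F"
  have inv: "H ** F = mat 1" "transpose F ** transpose H = mat 1"
    using assms matrix_inv_right_left[of F]
    by (simp_all add: H_def invertible_det_nz flip: matrix_transpose_mul)
  have "H ** (F ** C ** transpose F) ** transpose H = C" for C
  proof -
    have "H ** (F ** C ** transpose F) ** transpose H = (H ** F) ** C ** (transpose F ** transpose H)"
      by (simp only: matrix_mul_assoc)
    then show ?thesis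
      by (simp add: inv)
  qed
  then show "F ** A ** transpose F = F ** B ** transpose F \<Longrightarrow> A = B"
    by metis
qed simp

lemma transpose_mult_inv_transpose_SOn_iff:
  fixes F X :: "real^'n^'n"
  assumes F: "det F > 0" and X: "det X > 0"
  shows "transpose X ** matrix_inv (transpose F) \<in> SOn \<longleftrightarrow> X ** transpose X = F ** transpose F"
proof -
  define G where "G = matrix_inv (transpose F)"
  define R where "R = transpose X ** G"
  have "X = F ** transpose R"
    using mult_transpose_inv_transpose_cancel(1)[of F X] F by (simp add: R_def G_def)
  then have "X ** transpose X = F ** (transpose R ** R) ** transpose F"
    by (simp add: matrix_transpose_mul matrix_mul_assoc)
  then have orth_iff: "orthogonal_matrix R \<longleftrightarrow> X ** transpose X = F ** transpose F"
    using invertible_congruence_eq_iff[of F "transpose R ** R" "mat 1"] F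
    by (simp add: orthogonal_matrix)
  have "transpose F ** G = mat 1"
    using F by (simp add: G_def matrix_inv_right_left invertible_det_nz)
  then have "det F * det G = 1"
    by (metis det_I det_mul det_transpose)
  then have "det G > 0"
    using F by (metis zero_less_mult_pos zero_less_one)
  then have "det R > 0"
    using X by (simp add: R_def det_mul)
  then have "R \<in> SOn \<longleftrightarrow> orthogonal_matrix R"
    using det_orthogonal_matrix[of R] by (auto simp: SOn_def rotation_matrix_def)
  then show ?thesis
    using orth_iff by (simp add: R_def G_def)
qed

lemma commutator_form_iff:
  fixes X :: "real^'n^'n"
  shows "(X - transpose X) ** (c *\<^sub>R (X + transpose X) - a *\<^sub>R mat 1)
      = c *\<^sub>R (X ** transpose X - transpose X ** X) \<longleftrightarrow>
    c *\<^sub>R (X ** X - transpose X ** transpose X) = a *\<^sub>R (X - transpose X)"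
proof -
  have "(X - transpose X) ** (c *\<^sub>R (X + transpose X) - a *\<^sub>R mat 1)
        - c *\<^sub>R (X ** transpose X - transpose X ** X)
      = c *\<^sub>R (X ** X - transpose X ** transpose X) - a *\<^sub>R (X - transpose X)"
    by (simp add: matrix_algebra_simps algebra_simps)
  then show ?thesis
    by (metis eq_iff_diff_eq_0)
qed

theorem mainTheorem1:
  fixes F :: "real^'n^'n" and mu muc :: real
  assumes "CARD('n) \<ge> 2" and "det F > 0" and "mu > 0" and "muc \<ge> 0"
  shows
    "(\<forall>R \<in> SOn. crit_on (Wgen mu muc F) SOn R \<longleftrightarrow>
        (mu - muc) *\<^sub>R (F ** transpose R ** F ** transpose R - R ** transpose F ** R ** transpose F)
          = (2 * mu) *\<^sub>R (F ** transpose R - R ** transpose F))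
     \<and> (\<forall>X :: real^'n^'n. det X > 0 \<longrightarrow>
        (let R = transpose X ** matrix_inv (transpose F) in
          (R \<in> SOn \<and> crit_on (Wgen mu muc F) SOn R) \<longleftrightarrow>
          ((mu - muc) *\<^sub>R (X ** X - transpose X ** transpose X) = (2 * mu) *\<^sub>R (X - transpose X)
           \<and> X ** transpose X = F ** transpose F)))
     \<and> (\<forall>X :: real^'n^'n. det X > 0 \<longrightarrow>
        (let R = transpose X ** matrix_inv (transpose F) in
          (R \<in> SOn \<and> crit_on (Wgen mu muc F) SOn R) \<longleftrightarrow>
          ((X - transpose X) ** ((mu - muc) *\<^sub>R (X + transpose X) - (2 * mu) *\<^sub>R mat 1)
             = (mu - muc) *\<^sub>R (X ** transpose X - transpose X ** X)
           \<and> X ** transpose X = F ** transpose F)))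
     \<and> (\<forall>R \<in> SOn. det (F ** transpose R) > 0 \<and>
          transpose (F ** transpose R) ** matrix_inv (transpose F) = R)"
proof -
  have F: "det F \<noteq> 0"
    using assms(2) by simp
  have crit_X: "(R \<in> SOn \<and> crit_on (Wgen mu muc F) SOn R) \<longleftrightarrow>
      ((mu - muc) *\<^sub>R (X ** X - transpose X ** transpose X) = (2 * mu) *\<^sub>R (X - transpose X)
       \<and> X ** transpose X = F ** transpose F)"
    if "det X > 0" and R: "R = transpose X ** matrix_inv (transpose F)" for X R
  proof -
    have X: "X = F ** transpose R"
      using mult_transpose_inv_transpose_cancel(1)[OF F, of X] R by simp
    have "F ** transpose R ** F ** transpose R = X ** X"
      and "R ** transpose F ** R ** transpose F = transpose X ** transpose X"
      and "F ** transpose R - R ** transpose F = X - transpose X"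
      by (simp_all add: X matrix_transpose_mul matrix_mul_assoc)
    then show ?thesis
      using crit_on_Wgen_iff[of R] transpose_mult_inv_transpose_SOn_iff[OF assms(2) \<open>det X > 0\<close>] R
      by auto
  qed
  have "det (F ** transpose R) > 0" if "R \<in> SOn" for R
    using that assms(2) by (simp add: det_mul SOn_def rotation_matrix_def)
  then show ?thesis
    unfolding Let_def commutator_form_iff
    using crit_on_Wgen_iff crit_X mult_transpose_inv_transpose_cancel(2)[OF F] by blast
qed

end
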